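(* If a weighted tetrahedron $(\mathcal T,O)$ (with $O\in\operatorname{int}\mathcal T$) is mono-unstable, then it has a stable equilibrium on exactly two of its faces.
   Context: $(\mathcal P,O)$, for a convex polyhedron $\mathcal P$ and $O\in\operatorname{int}\mathcal P$, is in equilibrium on a face, edge or vertex $X$ if there exists $Q$ in the relative interior of $X$ (a vertex being its own relative interior) such that the plane perpendicular to $[O,Q]$ at $Q$ supports $\mathcal P$; equilibria on faces are stable, on vertices unstable. $(\mathcal P,O)$ is mono-unstable if exactly one vertex carries an equilibrium. *)

theory Defs
  imports "HOL-Analysis.Analysis"
begin

definition supporting_plane_at :: "(real^3) set \<Rightarrow> real^3 \<Rightarrow> real^3 \<Rightarrow> bool" where
  "supporting_plane_at S a Q \<longleftrightarrow>
     a \<noteq> 0 \<and> S \<inter> {x. a \<bullet> x = a \<bullet> Q} \<noteq> {} \<and>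
     ((\<forall>x\<in>S. a \<bullet> x \<le> a \<bullet> Q) \<or> (\<forall>x\<in>S. a \<bullet> x \<ge> a \<bullet> Q))"

definition equilibrium_on :: "(real^3) set \<Rightarrow> real^3 \<Rightarrow> (real^3) set \<Rightarrow> bool" where
  "equilibrium_on P c X \<longleftrightarrow> (\<exists>Q \<in> rel_interior X. supporting_plane_at P (Q - c) Q)"

definition is_tetrahedron :: "(real^3) set \<Rightarrow> bool" where
  "is_tetrahedron T \<longleftrightarrow> (\<exists>V. finite V \<and> card V = 4 \<and> \<not> affine_dependent V \<and> T = convex hull V)"

definition faces_of :: "(real^3) set \<Rightarrow> (real^3) set set" where
  "faces_of P = {F. F face_of P \<and> aff_dim F = 2}"

definition vertices_of :: "(real^3) set \<Rightarrow> (real^3) set" where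
  "vertices_of P = {v. {v} face_of P}"

definition mono_unstable :: "(real^3) set \<Rightarrow> real^3 \<Rightarrow> bool" where
  "mono_unstable P c \<longleftrightarrow> (\<exists>!v. v \<in> vertices_of P \<and> equilibrium_on P c {v})"

end

theory Submission
  imports Defs
begin

(* Let z be the weighted centre. An edge x y ascends from x if (z - x) \<bullet> (y - x) < 0.
   A vertex carries an equilibrium iff no edge ascends from it; the distance to z increases
   strictly along ascending edges, and an ascending edge x y makes the angle x z y acute.

   Mono-instability leaves three vertices with an ascending edge. Since z is a positive
   combination of the vertices, no vertex makes acute angles at z with all three others, so no
   vertex lies on three ascending edges. Ordering the vertices by their distance from z then
   yields a labelling a, b, c, d with edges ascending from a to b and from b to c, and an
   ascending edge between c and d.

   The faces a b c and b c d contain two ascending edges with a common vertex m, which rules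
   out an equilibrium: its point Q, the orthogonal projection of z, would be a positive
   combination of the three vertices x, m, t with (x - Q) \<bullet> (m - Q) > 0 and
   (t - Q) \<bullet> (m - Q) > 0. For the faces a b d and a c d only the acute angles a z b,
   b z c, c z d are needed: they make the barycentric coordinates of the projection of z onto
   these faces positive, by explicit polynomial certificates in the Gram entries. *)

(* The distance to z strictly increases when x is left towards y. *)
definition ascending :: "'a::real_inner \<Rightarrow> 'a \<Rightarrow> 'a \<Rightarrow> bool" where
  "ascending z x y \<longleftrightarrow> (z - x) \<bullet> (y - x) < 0"

definition gram :: "'a::real_inner \<Rightarrow> 'a \<Rightarrow> 'a \<Rightarrow> real" where
  "gram z x y = (x - z) \<bullet> (y - z)"

(* proj_weight z y t x, proj_weight z x t y and proj_weight z x y t are homogeneous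
   barycentric coordinates of the orthogonal projection of z onto the plane through x, y, t. *)
definition bary_weight :: "real \<Rightarrow> real \<Rightarrow> real \<Rightarrow> real \<Rightarrow> real \<Rightarrow> real" where
  "bary_weight gxx gyy gxy gxt gyt = gxx * gyy - gxy\<^sup>2 - gxt * (gyy - gxy) - gyt * (gxx - gxy)"

abbreviation proj_weight :: "'a::real_inner \<Rightarrow> 'a \<Rightarrow> 'a \<Rightarrow> 'a \<Rightarrow> real" where
  "proj_weight z x y t \<equiv>
     bary_weight (gram z x x) (gram z y y) (gram z x y) (gram z x t) (gram z y t)"

lemma gram_sym: "gram z x y = gram z y x"
  by (simp add: gram_def inner_commute)

lemma gram_self_pos: "x \<noteq> z \<Longrightarrow> 0 < gram z x x"
  by (simp add: gram_def)

lemma gram_cauchy_schwarz: "(gram z x y)\<^sup>2 \<le> gram z x x * gram z y y"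
  unfolding gram_def by (rule Cauchy_Schwarz_ineq)

lemma ascending_edge_gram_pos:
  assumes "ascending z x y \<or> ascending z y x"
  shows "0 < gram z x y"
proof -
  have "0 < gram z x y" if "ascending z x y" for x y
    using that unfolding ascending_def gram_def
    by (smt (verit, best) inner_diff_left inner_diff_right inner_ge_zero inner_commute)
  then show ?thesis using assms gram_sym by metis
qed

lemma ascending_imp_dist_less:
  assumes "ascending z x y"
  shows "dist z x < dist z y"
proof -
  have "(y - z) \<bullet> (y - z) = (x - z) \<bullet> (x - z) - 2 * ((z - x) \<bullet> (y - x)) + (y - x) \<bullet> (y - x)"
    by (simp add: inner_diff_left inner_diff_right inner_commute)
  then have "(dist z x)\<^sup>2 < (dist z y)\<^sup>2"
    using assms unfolding ascending_def
    by (simp add: dist_norm power2_norm_eq_inner norm_minus_commute) (smt (verit) inner_ge_zero)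
  then show ?thesis by (rule power2_less_imp_less) simp
qed

lemma ascending_foot_acute:
  fixes p m Q z :: "'a::real_inner"
  assumes "(Q - z) \<bullet> (p - Q) = 0" "(Q - z) \<bullet> (m - Q) = 0"
    and "ascending z p m \<or> ascending z m p"
  shows "0 < (p - Q) \<bullet> (m - Q)"
proof -
  have *: "0 < (p - Q) \<bullet> (m - Q)"
    if "(Q - z) \<bullet> (p - Q) = 0" "(Q - z) \<bullet> (m - Q) = 0" "ascending z p m" for p m
    using that inner_ge_zero[of "p - Q"] unfolding ascending_def
    by (simp add: inner_diff_left inner_diff_right inner_commute)
  show ?thesis
    using assms *[of p m] *[of m p] by (auto simp: inner_commute)
qed

lemma balance_gram:
  fixes a b c d z u :: "'a::real_inner"
  assumes "wa *\<^sub>R (a - z) + wb *\<^sub>R (b - z) + wc *\<^sub>R (c - z) + wd *\<^sub>R (d - z) = 0"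
  shows "wa * gram z u a + wb * gram z u b + wc * gram z u c + wd * gram z u d = 0"
proof -
  have "(u - z) \<bullet> (wa *\<^sub>R (a - z) + wb *\<^sub>R (b - z) + wc *\<^sub>R (c - z) + wd *\<^sub>R (d - z)) = 0"
    using assms by simp
  then show ?thesis by (simp add: gram_def inner_add_right)
qed

lemma tetrahedron_interior_weights:
  fixes a b c d z :: "'a::euclidean_space"
  assumes "\<not> affine_dependent {a,b,c,d}" "distinct [a,b,c,d]"
    and "z \<in> interior (convex hull {a,b,c,d})"
  obtains wa wb wc wd where "0 < wa" "0 < wb" "0 < wc" "0 < wd"
    "wa *\<^sub>R (a - z) + wb *\<^sub>R (b - z) + wc *\<^sub>R (c - z) + wd *\<^sub>R (d - z) = 0"
proof -
  obtain w where w: "\<forall>v\<in>{a,b,c,d}. 0 < w v" "sum w {a,b,c,d} = 1"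
    "(\<Sum>v\<in>{a,b,c,d}. w v *\<^sub>R v) = z"
    using assms(3) unfolding interior_convex_hull_explicit[OF assms(1)]
    by (auto split: if_split_asm)
  have w_sum: "w a + w b + w c + w d = 1"
    and w_comb: "w a *\<^sub>R a + w b *\<^sub>R b + w c *\<^sub>R c + w d *\<^sub>R d = z"
    using w(2,3) assms(2) by (simp_all add: add.assoc)
  have "w a *\<^sub>R (a - z) + w b *\<^sub>R (b - z) + w c *\<^sub>R (c - z) + w d *\<^sub>R (d - z)
      = (w a *\<^sub>R a + w b *\<^sub>R b + w c *\<^sub>R c + w d *\<^sub>R d) - (w a + w b + w c + w d) *\<^sub>R z"
    by (simp add: algebra_simps)
  then show ?thesis using that[of "w a" "w b" "w c" "w d"] w(1) w_sum w_comb by simp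
qed

lemma balance_not_all_acute:
  fixes a b c d z :: "'a::real_inner"
  assumes "wa *\<^sub>R (a - z) + wb *\<^sub>R (b - z) + wc *\<^sub>R (c - z) + wd *\<^sub>R (d - z) = 0"
    and "0 < wa" "0 < wb" "0 < wc" "0 < wd" "a \<noteq> z"
  shows "\<not> (0 < gram z a b \<and> 0 < gram z a c \<and> 0 < gram z a d)"
proof
  assume "0 < gram z a b \<and> 0 < gram z a c \<and> 0 < gram z a d"
  then have "0 < wa * gram z a a + wb * gram z a b + wc * gram z a c + wd * gram z a d"
    using assms(2-5) gram_self_pos[OF assms(6)] by (simp add: add_pos_pos)
  then show False using balance_gram[OF assms(1), of a] by simp
qed

(* Gram entries g_uv = (u - z) \<bullet> (v - z) and positive barycentric weights of an interior
   point z of a tetrahedron a b c d whose angles a z b, b z c, c z d are acute. Each positivity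
   proof below is a certificate: a positive multiple of the weight, corrected by multiples of
   the balance equations, is a sum of manifestly nonnegative terms. *)
locale acute_path_gram =
  fixes gaa gbb gcc gdd gab gac gad gbc gbd gcd wa wb wc wd :: real
  assumes balance_a: "wa * gaa + wb * gab + wc * gac + wd * gad = 0"
    and balance_b: "wa * gab + wb * gbb + wc * gbc + wd * gbd = 0"
    and balance_c: "wa * gac + wb * gbc + wc * gcc + wd * gcd = 0"
    and balance_d: "wa * gad + wb * gbd + wc * gcd + wd * gdd = 0"
    and weights_pos: "0 < wa" "0 < wb" "0 < wc" "0 < wd"
    and norms_pos: "0 < gaa" "0 < gbb" "0 < gcc" "0 < gdd"
    and cauchy_schwarz: "gab\<^sup>2 \<le> gaa * gbb" "gad\<^sup>2 \<le> gaa * gdd" "gbd\<^sup>2 \<le> gbb * gdd"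
    and acute_path: "0 < gab" "0 < gbc" "0 < gcd"
begin

lemma gbd_neg: "gbd < 0"
proof -
  have "0 < wa * gab" "0 < wb * gbb" "0 < wc * gbc"
    using weights_pos norms_pos acute_path by simp_all
  then have "wd * gbd < 0" using balance_b by linarith
  then show ?thesis using weights_pos by (simp add: mult_less_0_iff)
qed

lemma gac_neg: "gac < 0"
proof -
  have "0 < wb * gbc" "0 < wc * gcc" "0 < wd * gcd"
    using weights_pos norms_pos acute_path by simp_all
  then have "wa * gac < 0" using balance_c by linarith
  then show ?thesis using weights_pos by (simp add: mult_less_0_iff)
qed

lemmas sign_conditions = weights_pos norms_pos cauchy_schwarz acute_path gac_neg gbd_neg

lemma face_abd_weight_d_pos: "0 < bary_weight gaa gbb gab gad gbd"
proof -
  have "wa * wd * bary_weight gaa gbb gab gad gbd =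
      wa * wc * gab * (- gac) + wa * wc * gaa * gbc + wc * wd * gbc * (- gbd) + wc * wd * gbb * gcd
      + wa * (wb + wd) * (gaa * gbb - gab\<^sup>2) + wd\<^sup>2 * (gbb * gdd - gbd\<^sup>2)
      + (wa * gab * (wa * gaa + wb * gab + wc * gac + wd * gad)
       + (wd * gbd - wa * gaa) * (wa * gab + wb * gbb + wc * gbc + wd * gbd)
       - wd * gbb * (wa * gad + wb * gbd + wc * gcd + wd * gdd))"
    (is "_ = ?P + _")
    unfolding bary_weight_def by (simp add: algebra_simps power2_eq_square)
  then have "wa * wd * bary_weight gaa gbb gab gad gbd = ?P"
    by (simp only: balance_a balance_b balance_d mult_zero_right add_0_right diff_zero)
  moreover have "0 < ?P"
    using sign_conditions by (intro add_pos_nonneg mult_pos_pos mult_nonneg_nonneg) auto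
  ultimately show ?thesis using weights_pos by (metis mult_pos_pos zero_less_mult_pos)
qed

lemma face_abd_weight_a_pos: "0 < bary_weight gbb gdd gbd gab gad"
proof -
  have "wa * bary_weight gbb gdd gbd gab gad =
      wc * (gbc * (gdd - gbd) + gcd * (gbb - gbd)) + (wa + wb + wd) * (gbb * gdd - gbd\<^sup>2)
      - ((gdd - gbd) * (wa * gab + wb * gbb + wc * gbc + wd * gbd)
       + (gbb - gbd) * (wa * gad + wb * gbd + wc * gcd + wd * gdd))"
    (is "_ = ?P - _")
    unfolding bary_weight_def by (simp add: algebra_simps power2_eq_square)
  then have "wa * bary_weight gbb gdd gbd gab gad = ?P"
    by (simp only: balance_b balance_d mult_zero_right add_0_right diff_zero)
  moreover have "0 < ?P"
    using sign_conditions by (intro add_pos_nonneg mult_pos_pos mult_nonneg_nonneg) auto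
  ultimately show ?thesis using weights_pos by (metis zero_less_mult_pos)
qed

lemma face_abd_weight_b_pos: "0 < bary_weight gaa gdd gad gab gbd"
proof -
  have "wa * wd * bary_weight gaa gdd gad gab gbd =
      wa * wc * gab * (- gac) + wa * wc * gaa * gbc + wc * wd * gcd * (- gbd) + wc * wd * gdd * gbc
      + wa * wb * (gaa * gbb - gab\<^sup>2) + wa * wd * (gaa * gdd - gad\<^sup>2)
      + wb * wd * (gbb * gdd - gbd\<^sup>2)
      + (wa * gab * (wa * gaa + wb * gab + wc * gac + wd * gad)
       - (wa * gaa - wa * gad - wc * gcd - wb * gbd) * (wa * gab + wb * gbb + wc * gbc + wd * gbd)
       - (wa * gab + wb * gbb + wc * gbc) * (wa * gad + wb * gbd + wc * gcd + wd * gdd))"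
    (is "_ = ?P + _")
    unfolding bary_weight_def by (simp add: algebra_simps power2_eq_square)
  then have "wa * wd * bary_weight gaa gdd gad gab gbd = ?P"
    by (simp only: balance_a balance_b balance_d mult_zero_right add_0_right diff_zero)
  moreover have "0 < ?P"
    using sign_conditions by (intro add_pos_nonneg mult_pos_pos mult_nonneg_nonneg) auto
  ultimately show ?thesis using weights_pos by (metis mult_pos_pos zero_less_mult_pos)
qed

end

lemma acute_path_proj_weights_pos:
  fixes a b c d z :: "'a::real_inner"
  assumes balance: "wa *\<^sub>R (a - z) + wb *\<^sub>R (b - z) + wc *\<^sub>R (c - z) + wd *\<^sub>R (d - z) = 0"
    and weights: "0 < wa" "0 < wb" "0 < wc" "0 < wd"
    and off_center: "a \<noteq> z" "b \<noteq> z" "c \<noteq> z" "d \<noteq> z"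
    and acute: "0 < gram z a b" "0 < gram z b c" "0 < gram z c d"
  shows "0 < proj_weight z a b d" "0 < proj_weight z b d a" "0 < proj_weight z a d b"
proof -
  note row = balance_gram[OF balance]
  interpret acute_path_gram "gram z a a" "gram z b b" "gram z c c" "gram z d d"
    "gram z a b" "gram z a c" "gram z a d" "gram z b c" "gram z b d" "gram z c d" wa wb wc wd
  proof
    show "wa * gram z a b + wb * gram z b b + wc * gram z b c + wd * gram z b d = 0"
      using row[of b] by (simp add: gram_sym[of z b a])
    show "wa * gram z a c + wb * gram z b c + wc * gram z c c + wd * gram z c d = 0"
      using row[of c] by (simp add: gram_sym[of z c a] gram_sym[of z c b])
    show "wa * gram z a d + wb * gram z b d + wc * gram z c d + wd * gram z d d = 0"
      using row[of d] by (simp add: gram_sym[of z d a] gram_sym[of z d b] gram_sym[of z d c])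
  qed (use row[of a] weights off_center acute gram_self_pos gram_cauchy_schwarz in auto)
  show "0 < proj_weight z a b d" by (rule face_abd_weight_d_pos)
  show "0 < proj_weight z b d a"
    using face_abd_weight_a_pos by (simp add: gram_sym[of z b a] gram_sym[of z d a])
  show "0 < proj_weight z a d b"
    using face_abd_weight_b_pos by (simp add: gram_sym[of z d b])
qed

lemma proj_weight_normal:
  fixes x y t z :: "'a::real_inner"
  defines "h \<equiv> proj_weight z y t x *\<^sub>R (x - z) + proj_weight z x t y *\<^sub>R (y - z)
      + proj_weight z x y t *\<^sub>R (t - z)"
  shows "h \<bullet> (y - z) = h \<bullet> (x - z)" "h \<bullet> (t - z) = h \<bullet> (x - z)"
proof -
  have h: "h \<bullet> (v - z) = proj_weight z y t x * gram z x v + proj_weight z x t y * gram z y v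
      + proj_weight z x y t * gram z t v" for v
    unfolding h_def gram_def by (simp add: inner_add_left)
  show "h \<bullet> (y - z) = h \<bullet> (x - z)" "h \<bullet> (t - z) = h \<bullet> (x - z)"
    unfolding h bary_weight_def gram_sym[of z y x] gram_sym[of z t x] gram_sym[of z t y]
    by (simp_all add: algebra_simps power2_eq_square)
qed

lemma proj_weights_foot:
  fixes x y t z :: "'a::real_inner"
  assumes pos: "0 < proj_weight z y t x" "0 < proj_weight z x t y" "0 < proj_weight z x y t"
  obtains lx ly lt Q where "0 < lx" "0 < ly" "0 < lt" "lx + ly + lt = 1"
    "Q = lx *\<^sub>R x + ly *\<^sub>R y + lt *\<^sub>R t" "\<forall>v\<in>{x,y,t}. (Q - z) \<bullet> (v - Q) = 0"
proof -
  define S where "S = proj_weight z y t x + proj_weight z x t y + proj_weight z x y t"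
  define lx ly lt where "lx = proj_weight z y t x / S" "ly = proj_weight z x t y / S"
    "lt = proj_weight z x y t / S"
  define Q where "Q = lx *\<^sub>R x + ly *\<^sub>R y + lt *\<^sub>R t"
  define h where "h = proj_weight z y t x *\<^sub>R (x - z) + proj_weight z x t y *\<^sub>R (y - z)
      + proj_weight z x y t *\<^sub>R (t - z)"
  have "0 < S" using pos unfolding S_def by simp
  then have l: "0 < lx" "0 < ly" "0 < lt" "lx + ly + lt = 1"
    using pos unfolding lx_ly_lt_def S_def by (simp_all add: add_divide_distrib[symmetric])
  have Qz: "Q - z = lx *\<^sub>R (x - z) + ly *\<^sub>R (y - z) + lt *\<^sub>R (t - z)"
    using l(4) unfolding Q_def by (simp add: algebra_simps flip: scaleR_add_left)
  then have "Q - z = (1 / S) *\<^sub>R h"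
    unfolding lx_ly_lt_def h_def by (simp add: scaleR_add_right)
  then have "gram z Q v = (1 / S) * (h \<bullet> (v - z))" for v
    by (simp add: gram_def)
  moreover have "h \<bullet> (y - z) = h \<bullet> (x - z)" "h \<bullet> (t - z) = h \<bullet> (x - z)"
    unfolding h_def by (rule proj_weight_normal)+
  ultimately have level: "gram z Q y = gram z Q x" "gram z Q t = gram z Q x"
    by simp_all
  have "gram z Q Q = lx * gram z Q x + ly * gram z Q y + lt * gram z Q t"
    unfolding gram_def by (subst (2) Qz) (simp add: inner_add_right)
  then have "gram z Q Q = gram z Q x"
    using l(4) level by (simp add: distrib_right[symmetric])
  moreover have "(Q - z) \<bullet> (v - Q) = gram z Q v - gram z Q Q" for v
    unfolding gram_def by (simp add: inner_diff_right)
  ultimately have "\<forall>v\<in>{x,y,t}. (Q - z) \<bullet> (v - Q) = 0"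
    using level by simp
  then show ?thesis using that l Q_def by blast
qed

lemma vertex_notin_interior:
  fixes V :: "'a::euclidean_space set"
  assumes "\<not> affine_dependent V" "v \<in> V"
  shows "v \<notin> interior (convex hull V)"
  using assms extreme_point_not_in_interior extreme_point_of_convex_hull_affine_independent
  by blast

lemma vertices_of_simplex:
  fixes V :: "(real^3) set"
  assumes "\<not> affine_dependent V"
  shows "vertices_of (convex hull V) = V"
  unfolding vertices_of_def face_of_singleton
    extreme_point_of_convex_hull_affine_independent[OF assms] by simp

lemma simplex_facet_disjoint_interior:
  fixes V :: "'a::euclidean_space set"
  assumes indep: "\<not> affine_dependent V" and "v \<in> V"
  shows "convex hull (V - {v}) \<inter> interior (convex hull V) = {}"
proof -
  have "\<exists>C\<subseteq>V. convex hull (V - {v}) = convex hull C"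
    by (intro exI[of _ "V - {v}"]) auto
  then have face: "convex hull (V - {v}) face_of convex hull V"
    by (simp add: face_of_convex_hull_affine_independent[OF indep])
  have "v \<notin> affine hull (V - {v})"
    using indep assms(2) unfolding affine_dependent_def by blast
  then have "v \<notin> convex hull (V - {v})"
    using convex_hull_subset_affine_hull by blast
  then have "convex hull (V - {v}) \<noteq> convex hull V"
    using hull_inc[OF assms(2), of convex] by auto
  then show ?thesis
    using face_of_disjoint_interior[OF face] by blast
qed

lemma convex_hull_simplex_subsets_eq_iff:
  fixes V :: "'a::euclidean_space set"
  assumes "\<not> affine_dependent V" "C \<subseteq> V" "D \<subseteq> V"
  shows "convex hull C = convex hull D \<longleftrightarrow> C = D"
proof
  assume hulls: "convex hull C = convex hull D"
  show "C = D"
  proof (rule set_eqI)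
    fix x show "x \<in> C \<longleftrightarrow> x \<in> D"
      using extreme_point_of_convex_hull_affine_independent[of C x]
        extreme_point_of_convex_hull_affine_independent[of D x]
        affine_independent_subset[OF assms(1)] assms(2,3) hulls
      by simp
  qed
qed simp

lemma faces_of_tetrahedron:
  fixes V :: "(real^3) set"
  assumes indep: "\<not> affine_dependent V" and card: "card V = 4"
  shows "faces_of (convex hull V) = (\<lambda>v. convex hull (V - {v})) ` V"
proof -
  have fin: "finite V" using card by (simp add: card_ge_0_finite)
  have aff_dim: "aff_dim (convex hull C) = int (card C) - 1" if "C \<subseteq> V" for C
    using aff_dim_affine_independent[OF affine_independent_subset[OF indep that]]
    by (simp add: aff_dim_convex_hull)
  have three: "C \<subseteq> V \<and> card C = 3 \<longleftrightarrow> (\<exists>v\<in>V. C = V - {v})" for C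
  proof
    assume C: "C \<subseteq> V \<and> card C = 3"
    then have "card (V - C) = 1"
      using card fin card_Diff_subset[of C V] finite_subset[of C V] by simp
    then obtain v where "V - C = {v}" by (auto simp: card_1_singleton_iff)
    then show "\<exists>v\<in>V. C = V - {v}" using C by blast
  next
    assume "\<exists>v\<in>V. C = V - {v}"
    then show "C \<subseteq> V \<and> card C = 3" using card fin by auto
  qed
  show ?thesis
  proof (intro set_eqI iffI)
    fix F assume "F \<in> faces_of (convex hull V)"
    then have face: "F face_of convex hull V" and "aff_dim F = 2"
      unfolding faces_of_def by auto
    from face_of_convex_hull_affine_independent[OF indep, THEN iffD1, OF face]
    obtain C where C: "C \<subseteq> V \<and> F = convex hull C" ..
    with \<open>aff_dim F = 2\<close> aff_dim have "card C = 3" by auto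
    with C have "\<exists>v\<in>V. C = V - {v}" using three[of C] by simp
    with C show "F \<in> (\<lambda>v. convex hull (V - {v})) ` V" by blast
  next
    fix F assume "F \<in> (\<lambda>v. convex hull (V - {v})) ` V"
    then obtain v where v: "v \<in> V" "F = convex hull (V - {v})" by blast
    then have "V - {v} \<subseteq> V" "card (V - {v}) = 3" using three by blast+
    moreover have "\<exists>c\<subseteq>V. F = convex hull c"
      using v by (intro exI[of _ "V - {v}"]) auto
    then have "F face_of convex hull V"
      by (simp add: face_of_convex_hull_affine_independent[OF indep])
    ultimately show "F \<in> faces_of (convex hull V)"
      unfolding faces_of_def using v aff_dim by simp
  qed
qed

lemma equilibrium_onI:
  fixes z Q :: "real^3"
  assumes "Q \<in> rel_interior F" "F \<subseteq> convex hull V" "Q \<noteq> z"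
    and "\<forall>v\<in>V. (Q - z) \<bullet> (v - Q) \<le> 0"
  shows "equilibrium_on (convex hull V) z F"
proof -
  have "convex hull V \<subseteq> {p. (Q - z) \<bullet> p \<le> (Q - z) \<bullet> Q}"
    using assms(4) by (intro hull_minimal) (auto simp: convex_halfspace_le inner_diff_right)
  moreover have "Q \<in> convex hull V"
    using assms(1,2) rel_interior_subset by blast
  ultimately have "supporting_plane_at (convex hull V) (Q - z) Q"
    using assms(3) unfolding supporting_plane_at_def by auto
  then show ?thesis
    using assms(1) unfolding equilibrium_on_def by blast
qed

lemma equilibrium_on_simplex_foot:
  fixes z :: "real^3" and V :: "(real^3) set"
  assumes "equilibrium_on T z (convex hull V)" "\<not> affine_dependent V" "V \<subseteq> T" "z \<in> T"
  obtains Q u where "\<forall>v\<in>V. 0 < u v" "sum u V = 1" "(\<Sum>v\<in>V. u v *\<^sub>R v) = Q"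
    "\<forall>v\<in>V. (Q - z) \<bullet> (v - Q) = 0"
proof -
  obtain Q where Q: "Q \<in> rel_interior (convex hull V)" and sp: "supporting_plane_at T (Q - z) Q"
    using assms(1) unfolding equilibrium_on_def by blast
  obtain u where u: "\<forall>v\<in>V. 0 < u v" "sum u V = 1" "(\<Sum>v\<in>V. u v *\<^sub>R v) = Q"
    using Q unfolding rel_interior_convex_hull_explicit[OF assms(2)] by blast
  have "0 < (Q - z) \<bullet> (Q - z)"
    using sp unfolding supporting_plane_at_def by simp
  then have "(Q - z) \<bullet> z < (Q - z) \<bullet> Q"
    by (simp add: inner_diff_right)
  then have "\<forall>p\<in>T. (Q - z) \<bullet> p \<le> (Q - z) \<bullet> Q"
    using sp assms(4) unfolding supporting_plane_at_def by (meson leD)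
  then have below: "\<forall>p\<in>T. 0 \<le> (Q - z) \<bullet> (Q - p)"
    by (simp add: inner_diff_right)
  have fin: "finite V" using assms(2) aff_independent_finite by blast
  have "(\<Sum>v\<in>V. u v *\<^sub>R (Q - v)) = sum u V *\<^sub>R Q - Q"
    using u(3) by (simp add: scaleR_diff_right sum_subtractf scaleR_sum_left)
  then have "(Q - z) \<bullet> (\<Sum>v\<in>V. u v *\<^sub>R (Q - v)) = 0"
    using u(2) by simp
  then have sum0: "(\<Sum>v\<in>V. u v * ((Q - z) \<bullet> (Q - v))) = 0"
    by (simp add: inner_sum_right)
  have nonneg: "0 \<le> u v * ((Q - z) \<bullet> (Q - v))" if "v \<in> V" for v
    using u(1) below assms(3) that by (intro mult_nonneg_nonneg) auto
  have "u v * ((Q - z) \<bullet> (Q - v)) = 0" if "v \<in> V" for v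
    using sum_nonneg_eq_0_iff[OF fin, of "\<lambda>v. u v * ((Q - z) \<bullet> (Q - v))"] nonneg sum0 that
    by simp
  then have "(Q - z) \<bullet> (Q - v) = 0" if "v \<in> V" for v
    using u(1) that by fastforce
  moreover have "(Q - z) \<bullet> (v - Q) = - ((Q - z) \<bullet> (Q - v))" for v
    by (simp add: inner_diff_right)
  ultimately have "\<forall>v\<in>V. (Q - z) \<bullet> (v - Q) = 0"
    by simp
  then show ?thesis using that u by blast
qed

lemma not_ascending_vertex_equilibrium:
  fixes v z :: "real^3"
  assumes "v \<in> V" "v \<noteq> z" "\<forall>u\<in>V. \<not> ascending z v u"
  shows "equilibrium_on (convex hull V) z {v}"
proof (rule equilibrium_onI)
  show "{v} \<subseteq> convex hull V" using assms(1) by (simp add: hull_inc)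
  have "(v - z) \<bullet> (u - v) = - ((z - v) \<bullet> (u - v))" for u
    by (simp add: inner_diff_left)
  then show "\<forall>u\<in>V. (v - z) \<bullet> (u - v) \<le> 0"
    using assms(3) unfolding ascending_def by (simp add: not_less)
qed (use assms(2) in simp_all)

lemma two_ascending_edges_no_equilibrium:
  fixes x m t z :: "real^3"
  assumes "\<not> affine_dependent {x,m,t}" "{x,m,t} \<subseteq> T" "z \<in> T"
    and xm: "ascending z x m \<or> ascending z m x" and tm: "ascending z t m \<or> ascending z m t"
  shows "\<not> equilibrium_on T z (convex hull {x,m,t})"
proof
  assume "equilibrium_on T z (convex hull {x,m,t})"
  then obtain Q u where u: "\<forall>v\<in>{x,m,t}. 0 < u v" "sum u {x,m,t} = 1"
      "(\<Sum>v\<in>{x,m,t}. u v *\<^sub>R v) = Q"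
    and foot: "\<forall>v\<in>{x,m,t}. (Q - z) \<bullet> (v - Q) = 0"
    by (rule equilibrium_on_simplex_foot[OF _ assms(1-3)])
  have acute: "0 < (x - Q) \<bullet> (m - Q)" "0 < (t - Q) \<bullet> (m - Q)"
    using ascending_foot_acute foot xm tm by auto
  have "(\<Sum>v\<in>{x,m,t}. u v *\<^sub>R (v - Q)) = Q - sum u {x,m,t} *\<^sub>R Q"
    using u(3) by (simp add: scaleR_diff_right sum_subtractf scaleR_sum_left)
  then have "(\<Sum>v\<in>{x,m,t}. u v *\<^sub>R (v - Q)) \<bullet> (m - Q) = 0"
    using u(2) by simp
  then have "(\<Sum>v\<in>{x,m,t}. u v * ((v - Q) \<bullet> (m - Q))) = 0"
    by (simp add: inner_sum_left)
  moreover have "0 < (\<Sum>v\<in>{x,m,t}. u v * ((v - Q) \<bullet> (m - Q)))"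
  proof (rule sum_pos2)
    show "0 < u x * ((x - Q) \<bullet> (m - Q))" using u(1) acute by simp
    show "\<And>v. v \<in> {x,m,t} \<Longrightarrow> 0 \<le> u v * ((v - Q) \<bullet> (m - Q))"
      using u(1) acute by (auto intro!: mult_nonneg_nonneg)
  qed auto
  ultimately show False by simp
qed

lemma proj_weights_face_equilibrium:
  fixes x y t s z :: "real^3"
  assumes indep: "\<not> affine_dependent {x,y,t,s}" and distinct_vs: "distinct [x,y,t,s]"
    and z: "z \<in> interior (convex hull {x,y,t,s})"
    and pos: "0 < proj_weight z y t x" "0 < proj_weight z x t y" "0 < proj_weight z x y t"
  shows "equilibrium_on (convex hull {x,y,t,s}) z (convex hull {x,y,t})"
proof -
  obtain lx ly lt Q where l: "0 < lx" "0 < ly" "0 < lt" "lx + ly + lt = 1"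
    and Q: "Q = lx *\<^sub>R x + ly *\<^sub>R y + lt *\<^sub>R t"
    and foot: "\<forall>v\<in>{x,y,t}. (Q - z) \<bullet> (v - Q) = 0"
    by (rule proj_weights_foot[OF pos])
  have indep3: "\<not> affine_dependent {x,y,t}"
    using indep by (rule affine_independent_subset) auto
  have "Q \<in> rel_interior (convex hull {x,y,t})"
  proof -
    define u where "u v = (if v = x then lx else if v = y then ly else lt)" for v
    have "(\<forall>v\<in>{x,y,t}. 0 < u v) \<and> sum u {x,y,t} = 1 \<and> (\<Sum>v\<in>{x,y,t}. u v *\<^sub>R v) = Q"
      using distinct_vs l unfolding u_def Q by auto
    then show ?thesis
      unfolding rel_interior_convex_hull_explicit[OF indep3] by blast
  qed
  moreover have "Q \<noteq> z"
  proof -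
    have "{x,y,t,s} - {s} = {x,y,t}" using distinct_vs by auto
    then have "convex hull {x,y,t} \<inter> interior (convex hull {x,y,t,s}) = {}"
      using simplex_facet_disjoint_interior[OF indep, of s] by simp
    then show ?thesis
      using \<open>Q \<in> rel_interior (convex hull {x,y,t})\<close> rel_interior_subset z by blast
  qed
  moreover have "convex hull {x,y,t} \<subseteq> convex hull {x,y,t,s}"
    by (rule hull_mono) auto
  moreover have "(Q - z) \<bullet> (s - Q) \<le> 0"
  proof -
    obtain wx wy wt ws where w: "0 < wx" "0 < wy" "0 < wt" "0 < ws"
      and bal: "wx *\<^sub>R (x - z) + wy *\<^sub>R (y - z) + wt *\<^sub>R (t - z) + ws *\<^sub>R (s - z) = 0"
      using tetrahedron_interior_weights[OF indep distinct_vs z] by metis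
    have on_plane: "gram z Q v = gram z Q Q" if "v \<in> {x,y,t}" for v
      using foot that unfolding gram_def by (auto simp: inner_diff_right)
    have "0 \<le> gram z Q Q" unfolding gram_def by simp
    have "wx * gram z Q x + wy * gram z Q y + wt * gram z Q t + ws * gram z Q s = 0"
      by (rule balance_gram[OF bal])
    then have "ws * gram z Q s = - ((wx + wy + wt) * gram z Q Q)"
      using on_plane by (simp add: algebra_simps)
    moreover have "0 \<le> (wx + wy + wt) * gram z Q Q"
      using w \<open>0 \<le> gram z Q Q\<close> by simp
    ultimately have "ws * gram z Q s \<le> 0" by linarith
    then have "gram z Q s \<le> 0"
      using w(4) by (simp add: mult_le_0_iff)
    then show ?thesis
      using \<open>0 \<le> gram z Q Q\<close> unfolding gram_def by (simp add: inner_diff_right)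
  qed
  ultimately show ?thesis
    using foot equilibrium_onI[of Q "convex hull {x,y,t}" "{x,y,t,s}" z] by auto
qed

lemma sorted_three:
  fixes r :: "'a \<Rightarrow> real"
  assumes "card N = 3"
  obtains x1 x2 x3 where "N = {x1,x2,x3}" "distinct [x1,x2,x3]" "r x1 \<le> r x2" "r x2 \<le> r x3"
proof -
  obtain q1 q2 q3 where q: "N = {q1,q2,q3}" "distinct [q1,q2,q3]"
    using assms unfolding card_3_iff by auto
  define l where "l = sort_key r [q1,q2,q3]"
  have l: "length l = 3" "distinct l" "set l = N" "sorted (map r l)"
    using q unfolding l_def by (simp_all del: sort_key_simps)
  then obtain x1 x2 x3 where "l = [x1,x2,x3]"
    by (auto simp: numeral_3_eq_3 length_Suc_conv)
  then show ?thesis using that l by auto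
qed

lemma ascending_hamiltonian_path:
  fixes R :: "'a \<Rightarrow> 'a \<Rightarrow> bool" and r :: "'a \<Rightarrow> real"
  assumes card: "card V = 4" and D: "D \<in> V"
    and out: "\<And>x. x \<in> V - {D} \<Longrightarrow> \<exists>y\<in>V. R x y"
    and incr: "\<And>x y. R x y \<Longrightarrow> r x < r y"
    and no_hub: "\<And>M. M \<in> V \<Longrightarrow> \<exists>p\<in>V - {M}. \<not> R p M \<and> \<not> R M p"
  obtains a b c d where "V = {a,b,c,d}" "distinct [a,b,c,d]" "R a b" "R b c" "R c d \<or> R d c"
proof -
  have "card (V - {D}) = 3" using card D by simp
  then obtain x1 x2 x3 where x: "V - {D} = {x1,x2,x3}" "distinct [x1,x2,x3]"
    and r_order: "r x1 \<le> r x2" "r x2 \<le> r x3"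
    by (rule sorted_three)
  have V: "V = {x1,x2,x3,D}" using x(1) D by auto
  have distinct_vs: "distinct [x1,x2,x3,D]" using x by auto
  have succ: "\<exists>y\<in>V. R x y \<and> r x < r y" if "x \<in> {x1,x2,x3}" for x
    using out[of x] that x(1) incr by auto
  have R3: "R x3 D" using succ[of x3] V r_order by auto
  have R2: "R x2 x3 \<or> R x2 D" using succ[of x2] V r_order by auto
  have R1: "R x1 x2 \<or> R x1 x3 \<or> R x1 D" using succ[of x1] V by auto
  show ?thesis
    using R2
  proof
    assume R23: "R x2 x3"
    have "\<not> R x1 x3" using no_hub[of x3] V R3 R23 by auto
    then show ?thesis
      using R1
    proof (elim disjE)
      assume "R x1 x2" then show ?thesis using that[of x1 x2 x3 D] V distinct_vs R23 R3 by blast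
    next
      assume "R x1 D" then show ?thesis using that[of x2 x3 D x1] V distinct_vs R23 R3 by auto
    qed simp
  next
    assume R2D: "R x2 D"
    have "\<not> R x1 D" using no_hub[of D] V R3 R2D by auto
    then show ?thesis
      using R1
    proof (elim disjE)
      assume "R x1 x2" then show ?thesis using that[of x1 x2 D x3] V distinct_vs R2D R3 by auto
    next
      assume "R x1 x3" then show ?thesis using that[of x1 x3 D x2] V distinct_vs R2D R3 by auto
    qed simp
  qed
qed

lemma mono_unstable_ascending_path:
  fixes z :: "real^3"
  assumes indep: "\<not> affine_dependent V" and card: "card V = 4"
    and z: "z \<in> interior (convex hull V)" and mono: "mono_unstable (convex hull V) z"
  obtains a b c d where "V = {a,b,c,d}" "distinct [a,b,c,d]"
    "ascending z a b" "ascending z b c" "ascending z c d \<or> ascending z d c"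
proof -
  obtain D where D: "D \<in> V"
    and unique: "\<And>v. v \<in> V \<Longrightarrow> equilibrium_on (convex hull V) z {v} \<Longrightarrow> v = D"
    using mono unfolding mono_unstable_def vertices_of_simplex[OF indep] by metis
  have off_center: "v \<noteq> z" if "v \<in> V" for v
    using vertex_notin_interior[OF indep that] z by blast
  show ?thesis
  proof (rule ascending_hamiltonian_path[OF card D])
    show "\<exists>y\<in>V. ascending z x y" if x: "x \<in> V - {D}" for x
    proof (rule ccontr)
      assume "\<not> (\<exists>y\<in>V. ascending z x y)"
      then have "equilibrium_on (convex hull V) z {x}"
        using x off_center by (intro not_ascending_vertex_equilibrium) auto
      then show False using unique x by blast
    qed
    show "dist z x < dist z y" if "ascending z x y" for x y
      using that by (rule ascending_imp_dist_less)
    show "\<exists>p\<in>V - {M}. \<not> ascending z p M \<and> \<not> ascending z M p" if M: "M \<in> V" for M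
    proof -
      have "card (V - {M}) = 3" using card M by simp
      then obtain p1 p2 p3 where p: "V - {M} = {p1,p2,p3}" "distinct [p1,p2,p3]"
        unfolding card_3_iff by auto
      have V: "V = {M,p1,p2,p3}" using p(1) M by auto
      have "distinct [M,p1,p2,p3]" using p by auto
      then obtain wM w1 w2 w3 where "0 < wM" "0 < w1" "0 < w2" "0 < w3"
        "wM *\<^sub>R (M - z) + w1 *\<^sub>R (p1 - z) + w2 *\<^sub>R (p2 - z) + w3 *\<^sub>R (p3 - z) = 0"
        using tetrahedron_interior_weights[of M p1 p2 p3 z] indep z V by metis
      then have "\<not> (0 < gram z M p1 \<and> 0 < gram z M p2 \<and> 0 < gram z M p3)"
        using balance_not_all_acute off_center M by blast
      then show ?thesis
        using ascending_edge_gram_pos p(1) by blast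
    qed
  qed (rule that)
qed

lemma acute_path_face_equilibrium:
  fixes a b c d z :: "real^3"
  assumes indep: "\<not> affine_dependent {a,b,c,d}" and distinct_vs: "distinct [a,b,c,d]"
    and z: "z \<in> interior (convex hull {a,b,c,d})"
    and acute: "0 < gram z a b" "0 < gram z b c" "0 < gram z c d"
  shows "equilibrium_on (convex hull {a,b,c,d}) z (convex hull {a,b,d})"
proof -
  obtain wa wb wc wd where w: "0 < wa" "0 < wb" "0 < wc" "0 < wd"
    and bal: "wa *\<^sub>R (a - z) + wb *\<^sub>R (b - z) + wc *\<^sub>R (c - z) + wd *\<^sub>R (d - z) = 0"
    using tetrahedron_interior_weights[OF indep distinct_vs z] by metis
  have off_center: "a \<noteq> z" "b \<noteq> z" "c \<noteq> z" "d \<noteq> z"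
    using vertex_notin_interior[OF indep] z by blast+
  have eq: "{a,b,d,c} = {a,b,c,d}" by auto
  have "\<not> affine_dependent {a,b,d,c}" "distinct [a,b,d,c]" "z \<in> interior (convex hull {a,b,d,c})"
    using indep distinct_vs z unfolding eq by auto
  from proj_weights_face_equilibrium[OF this] acute_path_proj_weights_pos[OF bal w off_center acute]
  show ?thesis unfolding eq by blast
qed

lemma ascending_path_face_equilibria:
  fixes a b c d z :: "real^3"
  assumes indep: "\<not> affine_dependent {a,b,c,d}" and distinct_vs: "distinct [a,b,c,d]"
    and z: "z \<in> interior (convex hull {a,b,c,d})"
    and ab: "ascending z a b" and bc: "ascending z b c" and cd: "ascending z c d \<or> ascending z d c"
  shows "{F \<in> faces_of (convex hull {a,b,c,d}). equilibrium_on (convex hull {a,b,c,d}) z F}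
    = {convex hull {a,b,d}, convex hull {a,c,d}}"
proof -
  let ?T = "convex hull {a,b,c,d}"
  have "{a,b,c,d} - {a} = {b,c,d}" "{a,b,c,d} - {b} = {a,c,d}" "{a,b,c,d} - {c} = {a,b,d}"
    "{a,b,c,d} - {d} = {a,b,c}" using distinct_vs by auto
  then have faces: "faces_of ?T = {convex hull {b,c,d}, convex hull {a,c,d}, convex hull {a,b,d},
      convex hull {a,b,c}}"
    using faces_of_tetrahedron[OF indep] distinct_vs by simp
  have acute: "0 < gram z a b" "0 < gram z b c" "0 < gram z c d"
    using ab bc cd ascending_edge_gram_pos by blast+
  have abd: "equilibrium_on ?T z (convex hull {a,b,d})"
    by (rule acute_path_face_equilibrium[OF indep distinct_vs z acute])
  \<comment> \<open>the reversed path d c b a yields the face a c d\<close>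
  have rev: "{d,c,b,a} = {a,b,c,d}" "{d,c,a} = {a,c,d}" by auto
  have "0 < gram z d c" "0 < gram z c b" "0 < gram z b a"
    using acute by (simp_all add: gram_sym[of z d c] gram_sym[of z c b] gram_sym[of z b a])
  moreover have "\<not> affine_dependent {d,c,b,a}" "distinct [d,c,b,a]"
    "z \<in> interior (convex hull {d,c,b,a})"
    using indep distinct_vs z unfolding rev by auto
  ultimately have acd: "equilibrium_on ?T z (convex hull {a,c,d})"
    using acute_path_face_equilibrium[of d c b a z] unfolding rev by blast
  have "{a,b,c,d} \<subseteq> ?T" by (rule hull_subset)
  then have sub: "{a,b,c} \<subseteq> ?T" "{b,c,d} \<subseteq> ?T" by auto
  have "z \<in> ?T" using z by (rule interior_subset[THEN subsetD])
  have indep3: "\<not> affine_dependent {a,b,c}" "\<not> affine_dependent {b,c,d}"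
    using affine_independent_subset[OF indep] by auto
  have abc: "\<not> equilibrium_on ?T z (convex hull {a,b,c})"
    using two_ascending_edges_no_equilibrium[OF indep3(1) sub(1) \<open>z \<in> ?T\<close>] ab bc by blast
  have bcd: "\<not> equilibrium_on ?T z (convex hull {b,c,d})"
    using two_ascending_edges_no_equilibrium[OF indep3(2) sub(2) \<open>z \<in> ?T\<close>] bc cd by blast
  show ?thesis
    unfolding faces using abd acd abc bcd by auto
qed

theorem corollary1p9:
  fixes T :: "(real^3) set" and c :: "real^3"
  assumes "is_tetrahedron T"
    and "c \<in> interior T"
    and "mono_unstable T c"
  shows "card {F \<in> faces_of T. equilibrium_on T c F} = 2"
proof -
  obtain V where V: "card V = 4" "\<not> affine_dependent V" "T = convex hull V"
    using assms(1) unfolding is_tetrahedron_def by blast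
  obtain p q r s where pqrs: "V = {p,q,r,s}" "distinct [p,q,r,s]"
    "ascending c p q" "ascending c q r" "ascending c r s \<or> ascending c s r"
    using mono_unstable_ascending_path[OF V(2,1)] assms(2,3) V(3) by metis
  have "{F \<in> faces_of T. equilibrium_on T c F} = {convex hull {p,q,s}, convex hull {p,r,s}}"
    using ascending_path_face_equilibria[OF _ pqrs(2) _ pqrs(3-5)] V(2,3) assms(2)
    unfolding pqrs(1) by blast
  moreover have "convex hull {p,q,s} \<noteq> convex hull {p,r,s}"
    using convex_hull_simplex_subsets_eq_iff[OF V(2), of "{p,q,s}" "{p,r,s}"] pqrs(1,2)
    by auto
  ultimately show ?thesis by simp
qed

end
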